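(* Assume the standing assumptions (a)–(d) below, and let $T\in(0,\infty)$, $\epsilon\in[0,\infty)$ satisfy $(L+2\epsilon\tilde L)T^2\le 1/4$ and $\epsilon\tilde L\le K/3$. Let $\bar\mu,\bar\mu'$ be probability measures on $\mathbb{R}^d$ and $\bar x,\bar x',\bar v,\bar v'\in\mathbb{R}^d$; let $(\bar x_t,\bar v_t)=(\bar q_t,\bar p_t)(\bar x,\bar v,\bar\mu)$ and $(\bar x'_t,\bar v'_t)=(\bar q_t,\bar p_t)(\bar x',\bar v',\bar\mu')$ be solutions of the distribution-dependent Hamiltonian dynamics. If $\bar v=\bar v'$, then for every family $(\kappa_s)_{0\le s\le T}$ where $\kappa_s$ is a coupling of $\bar\mu_s$ and $\bar\mu'_s$, $$|\bar x_T-\bar x'_T|^2\le\big(1-\tfrac5{12}KT^2\big)|\bar x-\bar x'|^2+\epsilon^2\tilde L^2T^4\Big(\frac76+\frac{3}{2KT^2}\Big)\max_{s\le T}\Big(\int|y-y'|\kappa_s(\mathrm{d}y\,\mathrm{d}y')\Big)^2+\hat CT^2,$$ where $\hat C=(2L+K)\mathcal R^2$.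
   Context: Standing assumptions: $V:\mathbb{R}^d\to\mathbb{R}$, $W:\mathbb{R}^d\times\mathbb{R}^d\to\mathbb{R}$ are $C^1$, $\nabla_1W$ the gradient in the first argument, constants $L>0,K>0,\mathcal R\ge0,\tilde L\ge0$ with: (a) $V(0)=0$, $V\ge0$; (b) $|\nabla V(x)-\nabla V(y)|\le L|x-y|$; (c) $\langle x-y,\nabla V(x)-\nabla V(y)\rangle\ge K|x-y|^2+L^{-1}|\nabla V(x)-\nabla V(y)|^2$ whenever $|x-y|\ge\mathcal R$; (d) $W$ symmetric, $|\nabla_1W(x,y)-\nabla_1W(\tilde x,\tilde y)|\le\tilde L(|x-\tilde x|+|y-\tilde y|)$. Distribution-dependent Hamiltonian dynamics: for $(x,v)\in\mathbb{R}^{2d}$ and a probability measure $\nu$, $(\bar q_t,\bar p_t)(x,v,\nu)$ solves $\dot{\bar q}_t=\bar p_t$, $\dot{\bar p}_t=-\nabla V(\bar q_t)-\epsilon\int\nabla_1W(\bar q_t,u)\nu_t(\mathrm{d}u)$, $(\bar q_0,\bar p_0)=(x,v)$, where $\nu_t=\mathrm{Law}(\bar q_t(\tilde x,\tilde v,\nu))$, $(\tilde x,\tilde v)\sim\nu\otimes\mathcal N(0,I_d)$. Thus $\bar\mu_s,\bar\mu'_s$ are these time-$s$ laws for $\nu=\bar\mu,\bar\mu'$. *)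

theory Defs
  imports "HOL-Probability.Probability"
begin

definition std_gauss :: "'a::euclidean_space measure" where
  "std_gauss = density lborel
     (\<lambda>x. ennreal ((2 * pi) powr (- real DIM('a) / 2) * exp (- (norm x)\<^sup>2 / 2)))"

definition dd_law :: "'a::euclidean_space measure \<Rightarrow> ('a \<Rightarrow> 'a \<Rightarrow> real \<Rightarrow> 'a) \<Rightarrow> real \<Rightarrow> 'a measure" where
  "dd_law \<nu> q t = distr (\<nu> \<Otimes>\<^sub>M std_gauss) borel (\<lambda>z. q (fst z) (snd z) t)"

text \<open>Measurability/integrability are part of the requirement that the law and the
  integral are meaningful.\<close>
definition dd_flow ::
  "('a::euclidean_space \<Rightarrow> 'a) \<Rightarrow> ('a \<Rightarrow> 'a \<Rightarrow> 'a) \<Rightarrow> real \<Rightarrow> 'a measure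
    \<Rightarrow> ('a \<Rightarrow> 'a \<Rightarrow> real \<Rightarrow> 'a) \<Rightarrow> ('a \<Rightarrow> 'a \<Rightarrow> real \<Rightarrow> 'a) \<Rightarrow> bool" where
  "dd_flow gV gW1 \<epsilon> \<nu> q p \<longleftrightarrow>
     (\<forall>t\<ge>0. (\<lambda>z. q (fst z) (snd z) t) \<in> borel_measurable (borel \<Otimes>\<^sub>M borel)) \<and>
     (\<forall>x v. q x v 0 = x \<and> p x v 0 = v \<and>
       (\<forall>t\<ge>0. integrable (dd_law \<nu> q t) (\<lambda>u. gW1 (q x v t) u) \<and>
          (q x v has_vector_derivative p x v t) (at t within {0..}) \<and>
          (p x v has_vector_derivative
             (- gV (q x v t) - \<epsilon> *\<^sub>R (\<integral>u. gW1 (q x v t) u \<partial>dd_law \<nu> q t)))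
             (at t within {0..})))"

definition coupling :: "('a::euclidean_space \<times> 'a) measure \<Rightarrow> 'a measure \<Rightarrow> 'a measure \<Rightarrow> bool" where
  "coupling \<kappa> \<mu> \<mu>' \<longleftrightarrow> prob_space \<kappa> \<and> sets \<kappa> = sets (borel \<Otimes>\<^sub>M borel) \<and>
     distr \<kappa> borel fst = \<mu> \<and> distr \<kappa> borel snd = \<mu>'"

definition coupling_cost :: "('a::euclidean_space \<times> 'a) measure \<Rightarrow> ereal" where
  "coupling_cost \<kappa> = enn2ereal (\<integral>\<^sup>+ z. ennreal (norm (fst z - snd z)) \<partial>\<kappa>)"

end

theory Submission imports Defs begin

text \<open>Let \<open>z = x\<^sub>t - x'\<^sub>t\<close> and \<open>w = v\<^sub>t - v'\<^sub>t\<close>, so that \<open>z' = w\<close>, \<open>w(0) = 0\<close> and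
  \<open>w' = -(a + b)\<close>, where \<open>a\<close> is the difference of the confining forces and \<open>b\<close> that of the
  mean-field forces. Far-field monotonicity of \<open>\<nabla>V\<close> gives
  \<open>z \<bullet> a \<ge> K |z|\<^sup>2 + |a|\<^sup>2 / L - (2 L + K) R\<^sup>2\<close>, and comparing the two mean-field integrals
  through the coupling \<open>\<kappa>\<^sub>t\<close> gives \<open>|b| \<le> \<epsilon> Lt (|z| + M)\<close> with \<open>M\<close> the supremum of the
  transport costs. The Lyapunov function \<open>\<Phi> = |z|\<^sup>2 + 2 (T - t) z \<bullet> w + 3 (T - t)\<^sup>2 |w|\<^sup>2\<close>
  equals \<open>|z(0)|\<^sup>2\<close> at \<open>t = 0\<close> and \<open>|z(T)|\<^sup>2\<close> at \<open>t = T\<close>; for small \<open>T\<close>, Young's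
  inequality turns these two bounds into \<open>\<Phi>' \<le> - \<omega> (T - t) \<Phi> + (T - t) \<cdot> source\<close>, and
  integrating gives the contraction factor \<open>exp (- \<omega> T\<^sup>2 / 2) \<le> 1 - 5/12 K T\<^sup>2\<close>.
  Only the gradients of \<open>V\<close> and \<open>W\<close> enter.\<close>

lemma two_mult_le_weighted_squares:
  fixes x y \<delta> :: real
  assumes "\<delta> > 0"
  shows "2 * x * y \<le> \<delta> * x\<^sup>2 + y\<^sup>2 / \<delta>"
proof -
  have "0 \<le> (\<delta> * x - y)\<^sup>2 / \<delta>" using assms by simp
  also have "\<dots> = \<delta> * x\<^sup>2 + y\<^sup>2 / \<delta> - 2 * x * y"
    using assms by (simp add: power2_eq_square field_simps)
  finally show ?thesis by simp
qed

lemma two_mult_le_quadratic_form: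
  fixes P Q c x y :: real
  assumes "P \<ge> 0" "Q \<ge> 0" "c\<^sup>2 \<le> P * Q"
  shows "2 * c * x * y \<le> P * x\<^sup>2 + Q * y\<^sup>2"
proof (cases "P = 0")
  case True
  then show ?thesis using assms by simp
next
  case False
  then have P: "P > 0" using assms by simp
  have "P * (P * x\<^sup>2 + Q * y\<^sup>2 - 2 * c * x * y) = (P * x - c * y)\<^sup>2 + (P * Q - c\<^sup>2) * y\<^sup>2"
    by (simp add: algebra_simps power2_eq_square)
  also have "\<dots> \<ge> 0" using assms by simp
  finally show ?thesis using P by (simp add: zero_le_mult_iff)
qed

lemma lyapunov_discriminant_scaled:
  fixes k b \<omega> :: real
  assumes k: "k > 0" and b: "0 \<le> b" "b \<le> k / 3" and kb: "16 * k + 8 * b \<le> 1"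
    and \<omega>: "0 \<le> \<omega>" "\<omega> \<le> 103 / 120 * k"
  shows "(\<omega> + 3 * b)\<^sup>2 \<le> (23 / 8 + 9 * b - 3 * \<omega> - 15 * k) * (2 * k - 2 * b - \<omega> - 10 / 27 * k)"
proof -
  \<comment> \<open>It suffices to treat the extreme case \<open>\<omega> = c k\<close>, where the defect is an explicit
    nonnegative combination of \<open>k (k - 3 b)\<close>, \<open>k b\<close> and \<open>b (k/3 - b)\<close>.\<close>
  define c :: real where "c = 103 / 120"
  define q where "q = (2 - c - 10 / 27) * k - 2 * b"
  have q: "0 \<le> q" using b k unfolding q_def c_def by simp
  have sos: "(23 / 8) * q * (16 * k + 8 * b) - (3 * c + 15) * k * q + 9 * b * q - (c * k + 3 * b)\<^sup>2
      = 152549 / 7200 * (k * (k - 3 * b)) + 3 * (41261 / 64800) * (k * b) + 73 * (b * (k / 3 - b))"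
    unfolding q_def c_def by (simp add: field_simps power2_eq_square)
  have "0 \<le> 152549 / 7200 * (k * (k - 3 * b)) + 3 * (41261 / 64800) * (k * b) + 73 * (b * (k / 3 - b))"
    using k b by simp
  moreover have "(23 / 8) * q * (16 * k + 8 * b) \<le> (23 / 8) * q"
    using q kb by (simp add: mult_left_le)
  ultimately have extreme: "(c * k + 3 * b)\<^sup>2 \<le> (23 / 8 - (3 * c + 15) * k + 9 * b) * q"
    unfolding sos[symmetric] by (simp add: algebra_simps)
  have "(\<omega> + 3 * b)\<^sup>2 \<le> (c * k + 3 * b)\<^sup>2"
    using \<omega> b unfolding c_def by (intro power_mono) auto
  also note extreme
  also have "(23 / 8 - (3 * c + 15) * k + 9 * b) * q
      \<le> (23 / 8 + 9 * b - 3 * \<omega> - 15 * k) * (2 * k - 2 * b - \<omega> - 10 / 27 * k)"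
    using \<omega> q kb k b unfolding q_def c_def by (intro mult_mono) auto
  finally show ?thesis .
qed

lemma lyapunov_cross_term_le:
  fixes x y :: real
  assumes K: "K > 0" and T: "T > 0" and \<beta>: "0 \<le> \<beta>" "\<beta> \<le> K / 3"
    and \<rho>: "0 \<le> \<rho>" "\<rho> \<le> T" and step: "(L + 2 * \<beta>) * T\<^sup>2 \<le> 1 / 4" and KL: "K \<le> L / 4"
    and \<omega>: "0 \<le> \<omega>" "\<omega> \<le> 103 / 120 * K"
  shows "2 * (\<rho> * (3 * \<beta> + \<omega>)) * x * y
    \<le> (4 - 9 / 2 * L * \<rho>\<^sup>2 - 3 * \<omega> * \<rho>\<^sup>2 - 15 * K * T\<^sup>2) * x\<^sup>2 + (2 * K - 2 * \<beta> - \<omega> - 10 / 27 * K) * y\<^sup>2"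
proof (rule two_mult_le_quadratic_form)
  define P where "P = 4 - 9 / 2 * L * \<rho>\<^sup>2 - 3 * \<omega> * \<rho>\<^sup>2 - 15 * K * T\<^sup>2"
  define Q where "Q = 2 * K - 2 * \<beta> - \<omega> - 10 / 27 * K"
  have T2: "T\<^sup>2 > 0" using T by simp
  have \<rho>2: "\<rho>\<^sup>2 \<le> T\<^sup>2" using \<rho> by (simp add: power_mono)
  have LT: "L * T\<^sup>2 \<le> 1 / 4 - 2 * (\<beta> * T\<^sup>2)" using step by (simp add: algebra_simps)
  have "K * T\<^sup>2 \<le> L / 4 * T\<^sup>2" using KL T2 by simp
  then have kb: "16 * (K * T\<^sup>2) + 8 * (\<beta> * T\<^sup>2) \<le> 1" using LT by simp
  have scaled: "(\<omega> * T\<^sup>2 + 3 * (\<beta> * T\<^sup>2))\<^sup>2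
      \<le> (23 / 8 + 9 * (\<beta> * T\<^sup>2) - 3 * (\<omega> * T\<^sup>2) - 15 * (K * T\<^sup>2)) * (Q * T\<^sup>2)"
    using lyapunov_discriminant_scaled[of "K * T\<^sup>2" "\<beta> * T\<^sup>2" "\<omega> * T\<^sup>2"] K T2 \<beta> \<omega> kb
    unfolding Q_def by (simp add: algebra_simps)
  have "9 / 2 * L * \<rho>\<^sup>2 \<le> 9 / 2 * L * T\<^sup>2" "3 * \<omega> * \<rho>\<^sup>2 \<le> 3 * \<omega> * T\<^sup>2"
    using \<rho>2 K KL \<omega> by (simp_all add: mult_left_mono)
  then have P_ge: "23 / 8 + 9 * (\<beta> * T\<^sup>2) - 3 * (\<omega> * T\<^sup>2) - 15 * (K * T\<^sup>2) \<le> P"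
    using LT unfolding P_def by (simp add: algebra_simps)
  have QT: "0 \<le> Q * T\<^sup>2" using \<beta> \<omega> K T2 unfolding Q_def by simp
  have "\<omega> * T\<^sup>2 \<le> 103 / 120 * (K * T\<^sup>2)" "0 \<le> \<beta> * T\<^sup>2"
    using \<omega> \<beta> T2 by (simp_all add: mult_right_mono)
  then have "0 \<le> 23 / 8 + 9 * (\<beta> * T\<^sup>2) - 3 * (\<omega> * T\<^sup>2) - 15 * (K * T\<^sup>2)"
    using kb by linarith
  then show "0 \<le> P" using P_ge by linarith
  show "0 \<le> Q" using QT T2 by (simp add: zero_le_mult_iff)
  have "(\<rho> * (3 * \<beta> + \<omega>))\<^sup>2 * (T\<^sup>2 * T\<^sup>2) = (\<omega> * T\<^sup>2 + 3 * (\<beta> * T\<^sup>2))\<^sup>2 * \<rho>\<^sup>2"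
    by (simp add: power2_eq_square algebra_simps)
  also have "\<dots> \<le> (\<omega> * T\<^sup>2 + 3 * (\<beta> * T\<^sup>2))\<^sup>2 * T\<^sup>2" using \<rho>2 by (simp add: mult_left_mono)
  also have "\<dots> \<le> P * (Q * T\<^sup>2) * T\<^sup>2"
    using scaled P_ge QT T2 by (intro mult_right_mono order_trans[OF scaled]) auto
  finally show "(\<rho> * (3 * \<beta> + \<omega>))\<^sup>2 \<le> P * Q" using T2 by (simp add: algebra_simps)
qed

lemma neg_inner_le_of_norm_le:
  fixes u b :: "'a::real_inner"
  assumes "norm b \<le> \<beta> * (N + M)"
  shows "- (u \<bullet> b) \<le> \<beta> * norm u * N + \<beta> * norm u * M"
proof -
  have "- (u \<bullet> b) \<le> norm u * norm b" using norm_cauchy_schwarz[of "- u" b] by simp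
  also have "\<dots> \<le> norm u * (\<beta> * (N + M))" using assms by (simp add: mult_left_mono)
  finally show ?thesis by (simp add: algebra_simps)
qed

definition lyapunov :: "real \<Rightarrow> 'a::real_inner \<Rightarrow> 'a \<Rightarrow> real" where
  "lyapunov \<rho> z w = z \<bullet> z + 2 * \<rho> * (z \<bullet> w) + 3 * \<rho>\<^sup>2 * (w \<bullet> w)"

lemma lyapunov_derivative_le:
  fixes z w a b :: "'a::real_inner"
  assumes K: "K > 0" and T: "T > 0" and \<beta>: "0 \<le> \<beta>" "\<beta> \<le> K / 3"
    and \<rho>: "0 \<le> \<rho>" "\<rho> \<le> T" and step: "(L + 2 * \<beta>) * T\<^sup>2 \<le> 1 / 4" and KL: "K \<le> L / 4"
    and \<omega>: "0 \<le> \<omega>" "\<omega> \<le> 103 / 120 * K"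
    and za: "z \<bullet> a \<ge> K * (norm z)\<^sup>2 + (norm a)\<^sup>2 / L - C"
    and bb: "norm b \<le> \<beta> * (norm z + M)"
  shows "- 4 * \<rho> * (w \<bullet> w) + 2 * \<rho> * (z \<bullet> - (a + b)) + 6 * \<rho>\<^sup>2 * (w \<bullet> - (a + b))
      + \<omega> * \<rho> * lyapunov \<rho> z w
    \<le> \<rho> * (2 * C + 27 * \<beta>\<^sup>2 * M\<^sup>2 / (10 * K) + 3 * \<beta>\<^sup>2 * M\<^sup>2 / (5 * K * T\<^sup>2) * \<rho>\<^sup>2)"
proof -
  define Z W A where "Z = norm z" and "W = norm w" and "A = norm a"
  have L: "L > 0" using K KL by simp
  have zz: "z \<bullet> z = Z * Z" and ww: "w \<bullet> w = W * W"
    unfolding Z_def W_def by (simp_all add: power2_norm_eq_inner[symmetric] power2_eq_square)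
  have za': "- 2 * (z \<bullet> a) \<le> - 2 * K * Z\<^sup>2 - 2 * A\<^sup>2 / L + 2 * C"
    using za unfolding Z_def A_def by simp
  have zb: "- 2 * (z \<bullet> b) \<le> 2 * \<beta> * Z\<^sup>2 + 2 * \<beta> * Z * M"
    using neg_inner_le_of_norm_le[OF bb, of z] unfolding Z_def by (simp add: power2_eq_square)
  have wa: "- 6 * \<rho> * (w \<bullet> a) \<le> 2 * A\<^sup>2 / L + 9 / 2 * L * \<rho>\<^sup>2 * W\<^sup>2"
  proof -
    have "- (w \<bullet> a) \<le> W * A"
      using norm_cauchy_schwarz[of "- w" a] unfolding W_def A_def by simp
    from mult_left_mono[OF this, of "6 * \<rho>"]
    have "- 6 * \<rho> * (w \<bullet> a) \<le> 2 * A * (3 * \<rho> * W)" using \<rho> by (simp add: algebra_simps)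
    also have "\<dots> \<le> 2 / L * A\<^sup>2 + (3 * \<rho> * W)\<^sup>2 / (2 / L)"
      using two_mult_le_weighted_squares[of "2 / L" A "3 * \<rho> * W"] L by simp
    finally show ?thesis by (simp add: power2_eq_square algebra_simps)
  qed
  have wb: "- 6 * \<rho> * (w \<bullet> b) \<le> 6 * \<rho> * \<beta> * W * Z + 6 * \<rho> * \<beta> * W * M"
    using mult_left_mono[OF neg_inner_le_of_norm_le[OF bb, of w], of "6 * \<rho>"] \<rho>
    unfolding Z_def W_def by (simp add: algebra_simps)
  have zw: "2 * \<omega> * \<rho> * (z \<bullet> w) \<le> 2 * \<omega> * \<rho> * Z * W"
  proof -
    have "z \<bullet> w \<le> Z * W" unfolding Z_def W_def by (rule norm_cauchy_schwarz)
    then show ?thesis using \<omega> \<rho> by (simp add: mult_left_mono mult.assoc)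
  qed
  have young_ZM: "2 * Z * (\<beta> * M) \<le> 10 * K / 27 * Z\<^sup>2 + 27 / (10 * K) * (\<beta> * M)\<^sup>2"
    using two_mult_le_weighted_squares[of "10 * K / 27" Z "\<beta> * M"] K by simp
  have young_WM: "2 * W * (3 * \<rho> * \<beta> * M) \<le> 15 * K * T\<^sup>2 * W\<^sup>2 + 3 * \<rho>\<^sup>2 * (\<beta> * M)\<^sup>2 / (5 * K * T\<^sup>2)"
    using two_mult_le_weighted_squares[of "15 * K * T\<^sup>2" W "3 * \<rho> * \<beta> * M"] K T
    by (simp add: power2_eq_square mult_ac)
  have cross: "2 * (\<rho> * (3 * \<beta> + \<omega>)) * W * Z
      \<le> (4 - 9 / 2 * L * \<rho>\<^sup>2 - 3 * \<omega> * \<rho>\<^sup>2 - 15 * K * T\<^sup>2) * W\<^sup>2 + (2 * K - 2 * \<beta> - \<omega> - 10 / 27 * K) * Z\<^sup>2"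
    by (rule lyapunov_cross_term_le[OF K T \<beta> \<rho> step KL \<omega>])
  have "- 4 * (w \<bullet> w) + 2 * (z \<bullet> - (a + b)) + 6 * \<rho> * (w \<bullet> - (a + b)) + \<omega> * lyapunov \<rho> z w
      \<le> 2 * C + 27 * \<beta>\<^sup>2 * M\<^sup>2 / (10 * K) + 3 * \<beta>\<^sup>2 * M\<^sup>2 / (5 * K * T\<^sup>2) * \<rho>\<^sup>2"
    using za' zb wa wb zw young_ZM young_WM cross unfolding lyapunov_def
    by (simp add: algebra_simps power2_eq_square inner_add_right zz ww)
  from mult_left_mono[OF this \<rho>(1)] show ?thesis by (simp add: algebra_simps power2_eq_square)
qed

lemma has_real_derivative_inner:
  fixes f g :: "real \<Rightarrow> 'a::real_inner"
  assumes "(f has_vector_derivative f') (at t within S)" "(g has_vector_derivative g') (at t within S)"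
  shows "((\<lambda>t. f t \<bullet> g t) has_real_derivative (f t \<bullet> g' + f' \<bullet> g t)) (at t within S)"
  using has_derivative_inner[OF assms[unfolded has_vector_derivative_def]]
  unfolding has_field_derivative_def
  by (rule has_derivative_eq_rhs) (auto simp: algebra_simps fun_eq_iff)

lemma has_real_derivative_lyapunov:
  fixes z w :: "real \<Rightarrow> 'a::real_inner"
  assumes dz: "(z has_vector_derivative w t) (at t within S)"
    and dw: "(w has_vector_derivative w') (at t within S)"
  shows "((\<lambda>s. lyapunov (T - s) (z s) (w s)) has_real_derivative
      - 4 * (T - t) * (w t \<bullet> w t) + 2 * (T - t) * (z t \<bullet> w') + 6 * (T - t)\<^sup>2 * (w t \<bullet> w'))
    (at t within S)"
proof -
  note inner_derivs = has_real_derivative_inner[OF dz dz] has_real_derivative_inner[OF dz dw]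
    has_real_derivative_inner[OF dw dw]
  show ?thesis unfolding lyapunov_def
    by (rule derivative_eq_intros inner_derivs refl | simp)+
      (simp add: inner_commute algebra_simps power2_eq_square)
qed

lemma has_real_derivative_nonpos_imp_le:
  fixes f :: "real \<Rightarrow> real"
  assumes ab: "a \<le> b" and S: "{a..b} \<subseteq> S"
    and f': "\<And>t. t \<in> {a..b} \<Longrightarrow> (f has_real_derivative f' t) (at t within S)"
    and nonpos: "\<And>t. t \<in> {a..b} \<Longrightarrow> f' t \<le> 0"
  shows "f b \<le> f a"
proof (rule DERIV_nonpos_imp_decreasing_open[OF ab])
  fix t assume t: "a < t" "t < b"
  then have "t \<in> interior S" using interior_mono[OF S] by auto
  then show "\<exists>y. (f has_real_derivative y) (at t) \<and> y \<le> 0"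
    using f'[of t] nonpos[of t] t at_within_interior by fastforce
next
  show "continuous_on {a..b} f"
    unfolding continuous_on_eq_continuous_within
    using DERIV_continuous[OF f'] continuous_within_subset S by blast
qed

lemma inverse_exp_le_one_minus:
  fixes k :: real
  assumes "k \<le> 19 / 60"
  shows "inverse (exp (5 * k / 12 + k\<^sup>2 / 5)) \<le> 1 - 5 / 12 * k"
proof -
  define X where "X = 5 * k / 12 + k\<^sup>2 / 5"
  have "1 \<le> 1 + k\<^sup>2 * (19 / 720 - k / 12)" using assms by simp
  also have "\<dots> = (1 + X) * (1 - 5 / 12 * k)" unfolding X_def by (simp add: algebra_simps power2_eq_square)
  also have "\<dots> \<le> exp X * (1 - 5 / 12 * k)"
    using exp_ge_add_one_self[of X] assms by (intro mult_right_mono) auto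
  finally show ?thesis unfolding X_def[symmetric] by (simp add: field_simps)
qed

lemma gronwall_decaying_rate_le:
  fixes \<Phi> \<Phi>' :: "real \<Rightarrow> real"
  assumes T: "0 \<le> T" and \<omega>: "0 \<le> \<omega>" and c: "0 \<le> c0" "0 \<le> c1"
    and d\<Phi>: "\<And>t. t \<in> {0..T} \<Longrightarrow> (\<Phi> has_real_derivative \<Phi>' t) (at t within {0..})"
    and le: "\<And>t. t \<in> {0..T} \<Longrightarrow> \<Phi>' t + \<omega> * (T - t) * \<Phi> t \<le> (T - t) * (c0 + c1 * (T - t)\<^sup>2)"
  shows "\<Phi> T \<le> inverse (exp (\<omega> * T\<^sup>2 / 2)) * \<Phi> 0 + c0 * T\<^sup>2 / 2 + c1 * T ^ 4 / 4"
proof -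
  \<comment> \<open>\<open>\<Psi>\<close> is \<open>\<Phi>\<close> with the integrating factor of the rate \<open>\<omega> (T - t)\<close>, minus the integrated source.\<close>
  define budget where "budget t = c0 * (T * t - t\<^sup>2 / 2) + c1 * (T ^ 4 - (T - t) ^ 4) / 4" for t
  define \<Psi> where "\<Psi> = (\<lambda>t. exp (\<omega> * (T * t - t\<^sup>2 / 2)) * \<Phi> t - exp (\<omega> * T\<^sup>2 / 2) * budget t)"
  define \<Psi>' where "\<Psi>' t = exp (\<omega> * (T * t - t\<^sup>2 / 2)) * (\<Phi>' t + \<omega> * (T - t) * \<Phi> t)
    - exp (\<omega> * T\<^sup>2 / 2) * ((T - t) * (c0 + c1 * (T - t)\<^sup>2))" for t
  have "\<Psi> T \<le> \<Psi> 0"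
  proof (rule has_real_derivative_nonpos_imp_le[where a = 0 and b = T and f = \<Psi> and S = "{0..}"])
    fix t assume t: "t \<in> {0..T}"
    show "(\<Psi> has_real_derivative \<Psi>' t) (at t within {0..})"
      unfolding \<Psi>_def \<Psi>'_def budget_def
      by (rule derivative_eq_intros d\<Phi>[OF t] refl | simp add: field_simps power2_eq_square power3_eq_cube)+
    define E where "E = exp (\<omega> * (T * t - t\<^sup>2 / 2))"
    have "T * t - t\<^sup>2 / 2 \<le> T\<^sup>2 / 2" using sum_power2_ge_zero[of "T - t" 0]
      by (simp add: power2_eq_square algebra_simps)
    from mult_left_mono[OF this \<omega>]
    have "E \<le> exp (\<omega> * T\<^sup>2 / 2)" unfolding E_def by simp
    then have "E * ((T - t) * (c0 + c1 * (T - t)\<^sup>2)) \<le> exp (\<omega> * T\<^sup>2 / 2) * ((T - t) * (c0 + c1 * (T - t)\<^sup>2))"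
      using t c by (intro mult_right_mono) auto
    moreover have "E * (\<Phi>' t + \<omega> * (T - t) * \<Phi> t) \<le> E * ((T - t) * (c0 + c1 * (T - t)\<^sup>2))"
      using le[OF t] unfolding E_def by simp
    ultimately show "\<Psi>' t \<le> 0" unfolding \<Psi>'_def E_def[symmetric] by linarith
  qed (use T in auto)
  moreover have "\<Psi> 0 = \<Phi> 0" "\<Psi> T = exp (\<omega> * T\<^sup>2 / 2) * (\<Phi> T - (c0 * T\<^sup>2 / 2 + c1 * T ^ 4 / 4))"
    unfolding \<Psi>_def budget_def by (simp_all add: algebra_simps power2_eq_square)
  ultimately show ?thesis by (simp add: field_simps)
qed

lemma second_order_contraction:
  fixes z w a b :: "real \<Rightarrow> 'a::real_inner"
  assumes K: "K > 0" and T: "T > 0" and \<beta>: "0 \<le> \<beta>" "\<beta> \<le> K / 3" and C: "C \<ge> 0"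
    and step: "(L + 2 * \<beta>) * T\<^sup>2 \<le> 1 / 4" and KL: "K \<le> L / 4"
    and dz: "\<And>t. t \<in> {0..T} \<Longrightarrow> (z has_vector_derivative w t) (at t within {0..})"
    and dw: "\<And>t. t \<in> {0..T} \<Longrightarrow> (w has_vector_derivative - (a t + b t)) (at t within {0..})"
    and w0: "w 0 = 0"
    and za: "\<And>t. t \<in> {0..T} \<Longrightarrow> z t \<bullet> a t \<ge> K * (norm (z t))\<^sup>2 + (norm (a t))\<^sup>2 / L - C"
    and bb: "\<And>t. t \<in> {0..T} \<Longrightarrow> norm (b t) \<le> \<beta> * (norm (z t) + M)"
  shows "(norm (z T))\<^sup>2 \<le> (1 - 5 / 12 * K * T\<^sup>2) * (norm (z 0))\<^sup>2 + 3 * \<beta>\<^sup>2 * M\<^sup>2 * T\<^sup>2 / (2 * K) + C * T\<^sup>2"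
proof -
  have KT: "K * T\<^sup>2 \<le> 1 / 16"
  proof -
    have "K * T\<^sup>2 \<le> L / 4 * T\<^sup>2" using mult_right_mono[OF KL, of "T\<^sup>2"] by simp
    also have "\<dots> \<le> (L + 2 * \<beta>) * T\<^sup>2 / 4" using \<beta> by (simp add: mult_right_mono)
    finally show ?thesis using step by simp
  qed
  \<comment> \<open>The rate is chosen so that \<open>exp (- \<omega> T\<^sup>2 / 2) \<le> 1 - 5/12 K T\<^sup>2\<close>.\<close>
  define \<omega> where "\<omega> = 5 * K / 6 + 2 * K\<^sup>2 * T\<^sup>2 / 5"
  have \<omega>: "0 \<le> \<omega>" "\<omega> \<le> 103 / 120 * K"
    using K KT unfolding \<omega>_def by (simp_all add: power2_eq_square)
  define c0 where "c0 = 2 * C + 27 * \<beta>\<^sup>2 * M\<^sup>2 / (10 * K)"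
  define c1 where "c1 = 3 * \<beta>\<^sup>2 * M\<^sup>2 / (5 * K * T\<^sup>2)"
  have "lyapunov (T - T) (z T) (w T)
      \<le> inverse (exp (\<omega> * T\<^sup>2 / 2)) * lyapunov (T - 0) (z 0) (w 0) + c0 * T\<^sup>2 / 2 + c1 * T ^ 4 / 4"
  proof (rule gronwall_decaying_rate_le[where \<Phi> = "\<lambda>t. lyapunov (T - t) (z t) (w t)"])
    fix t assume t: "t \<in> {0..T}"
    then have \<rho>: "0 \<le> T - t" "T - t \<le> T" by auto
    show "((\<lambda>t. lyapunov (T - t) (z t) (w t)) has_real_derivative
        - 4 * (T - t) * (w t \<bullet> w t) + 2 * (T - t) * (z t \<bullet> - (a t + b t))
        + 6 * (T - t)\<^sup>2 * (w t \<bullet> - (a t + b t))) (at t within {0..})"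
      by (rule has_real_derivative_lyapunov[OF dz[OF t] dw[OF t]])
    show "- 4 * (T - t) * (w t \<bullet> w t) + 2 * (T - t) * (z t \<bullet> - (a t + b t))
        + 6 * (T - t)\<^sup>2 * (w t \<bullet> - (a t + b t)) + \<omega> * (T - t) * lyapunov (T - t) (z t) (w t)
        \<le> (T - t) * (c0 + c1 * (T - t)\<^sup>2)"
      using lyapunov_derivative_le[where w = "w t", OF K T \<beta> \<rho> step KL \<omega> za[OF t] bb[OF t]]
      unfolding c0_def c1_def by (simp add: algebra_simps)
  qed (use T \<omega> C K in \<open>auto simp: c0_def c1_def\<close>)
  moreover have "c0 * T\<^sup>2 / 2 + c1 * T ^ 4 / 4 = 3 * \<beta>\<^sup>2 * M\<^sup>2 * T\<^sup>2 / (2 * K) + C * T\<^sup>2"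
    unfolding c0_def c1_def using K T by (simp add: field_simps power2_eq_square power4_eq_xxxx)
  moreover have "inverse (exp (\<omega> * T\<^sup>2 / 2)) \<le> 1 - 5 / 12 * K * T\<^sup>2"
  proof -
    have rate: "\<omega> * T\<^sup>2 / 2 = 5 * (K * T\<^sup>2) / 12 + (K * T\<^sup>2)\<^sup>2 / 5"
      unfolding \<omega>_def by (simp add: algebra_simps power2_eq_square)
    have "inverse (exp (5 * (K * T\<^sup>2) / 12 + (K * T\<^sup>2)\<^sup>2 / 5)) \<le> 1 - 5 / 12 * (K * T\<^sup>2)"
      by (rule inverse_exp_le_one_minus) (use KT in simp)
    then show ?thesis unfolding rate by (simp only: mult.assoc)
  qed
  from mult_right_mono[OF this, of "(norm (z 0))\<^sup>2"]
  have "inverse (exp (\<omega> * T\<^sup>2 / 2)) * (norm (z 0))\<^sup>2 \<le> (1 - 5 / 12 * K * T\<^sup>2) * (norm (z 0))\<^sup>2"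
    by simp
  ultimately show ?thesis using w0 unfolding lyapunov_def by (simp add: power2_norm_eq_inner)
qed

lemma far_monotone_const_le:
  fixes g :: "'a::euclidean_space \<Rightarrow> 'a"
  assumes L: "L > 0"
    and far: "\<And>z y. norm (z - y) \<ge> R \<Longrightarrow>
             (z - y) \<bullet> (g z - g y) \<ge> K * (norm (z - y))\<^sup>2 + (1 / L) * (norm (g z - g y))\<^sup>2"
  shows "K \<le> L / 4"
proof -
  obtain e :: 'a where e: "norm e = 1" using norm_Basis SOME_Basis by blast
  define n where "n = max R 1"
  have n: "n \<ge> 1" "R \<le> n" "norm (n *\<^sub>R e) = n" unfolding n_def using e by auto
  define d where "d = g (n *\<^sub>R e) - g 0"
  have "K * n\<^sup>2 + (1 / L) * (norm d)\<^sup>2 \<le> (n *\<^sub>R e) \<bullet> d"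
    using far[of "n *\<^sub>R e" 0] n unfolding d_def by simp
  also have "\<dots> \<le> n * norm d" using norm_cauchy_schwarz[of "n *\<^sub>R e" d] n by simp
  also have "\<dots> \<le> L / 4 * n\<^sup>2 + (1 / L) * (norm d)\<^sup>2"
    using two_mult_le_weighted_squares[of "L / 2" n "norm d"] L by (simp add: field_simps)
  finally have "K * n\<^sup>2 \<le> L / 4 * n\<^sup>2" by simp
  then show ?thesis using n by simp
qed

lemma far_monotone_imp_inner_diff_ge:
  fixes g :: "'a::real_inner \<Rightarrow> 'a"
  assumes L: "L > 0" and K: "K > 0"
    and lip: "\<And>z y. norm (g z - g y) \<le> L * norm (z - y)"
    and far: "\<And>z y. norm (z - y) \<ge> R \<Longrightarrow>
             (z - y) \<bullet> (g z - g y) \<ge> K * (norm (z - y))\<^sup>2 + (1 / L) * (norm (g z - g y))\<^sup>2"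
  shows "(z - y) \<bullet> (g z - g y) \<ge> K * (norm (z - y))\<^sup>2 + (norm (g z - g y))\<^sup>2 / L - (2 * L + K) * R\<^sup>2"
proof (cases "norm (z - y) \<ge> R")
  case True
  moreover have "0 \<le> (2 * L + K) * R\<^sup>2" using L K by simp
  ultimately show ?thesis using far[OF True] by simp
next
  case False
  define r where "r = norm (z - y)"
  have r: "0 \<le> r" "r\<^sup>2 \<le> R\<^sup>2" using False unfolding r_def by (auto intro: power_mono)
  have g: "norm (g z - g y) \<le> L * r" unfolding r_def by (rule lip)
  have "(norm (g z - g y))\<^sup>2 \<le> (L * r)\<^sup>2" by (rule power_mono[OF g norm_ge_zero])
  then have "(norm (g z - g y))\<^sup>2 / L \<le> L * r\<^sup>2" using L by (simp add: field_simps power2_eq_square)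
  moreover have "- ((z - y) \<bullet> (g z - g y)) \<le> L * r\<^sup>2"
    using Cauchy_Schwarz_ineq2[of "z - y" "g z - g y"] mult_left_mono[OF g r(1)]
    unfolding r_def by (simp add: power2_eq_square abs_le_iff mult.commute mult.left_commute)
  moreover have "K * r\<^sup>2 \<le> K * R\<^sup>2" "L * r\<^sup>2 \<le> L * R\<^sup>2" using r K L by simp_all
  ultimately show ?thesis unfolding r_def by (simp add: algebra_simps)
qed

lemma coupling_integral_diff_le:
  fixes f :: "'a::euclidean_space \<Rightarrow> 'a \<Rightarrow> 'b::{banach, second_countable_topology}"
  assumes cp: "coupling \<kappa> \<mu>1 \<mu>2"
    and int1: "integrable \<mu>1 (f x)" and int2: "integrable \<mu>2 (f x')"
    and lip: "\<And>z y z' y'. norm (f z y - f z' y') \<le> Lt * (norm (z - z') + norm (y - y'))"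
    and Lt: "Lt \<ge> 0"
  shows "ereal (norm ((\<integral>u. f x u \<partial>\<mu>1) - (\<integral>u. f x' u \<partial>\<mu>2)))
    \<le> ereal (Lt * norm (x - x')) + ereal Lt * coupling_cost \<kappa>"
proof -
  have \<kappa>: "prob_space \<kappa>" "sets \<kappa> = sets (borel \<Otimes>\<^sub>M borel)"
    and \<mu>1: "distr \<kappa> borel fst = \<mu>1" and \<mu>2: "distr \<kappa> borel snd = \<mu>2"
    using cp unfolding coupling_def by auto
  have fst: "fst \<in> \<kappa> \<rightarrow>\<^sub>M (borel :: 'a measure)" and snd: "snd \<in> \<kappa> \<rightarrow>\<^sub>M (borel :: 'a measure)"
    using measurable_cong_sets[OF \<kappa>(2) refl] by auto
  have "Lt-lipschitz_on UNIV (f y)" for y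
    unfolding lipschitz_on_def using Lt lip[of y _ y] by (auto simp: dist_norm)
  then have f: "f y \<in> borel_measurable borel" for y
    by (intro borel_measurable_continuous_onI lipschitz_on_continuous_on)
  have int: "integrable \<kappa> (\<lambda>p. f x (fst p))" "integrable \<kappa> (\<lambda>p. f x' (snd p))"
    using int1 int2 unfolding \<mu>1[symmetric] \<mu>2[symmetric] integrable_distr_eq[OF fst f] integrable_distr_eq[OF snd f] .
  have "(\<integral>u. f x u \<partial>\<mu>1) - (\<integral>u. f x' u \<partial>\<mu>2) = (\<integral>p. f x (fst p) - f x' (snd p) \<partial>\<kappa>)"
    unfolding \<mu>1[symmetric] \<mu>2[symmetric] integral_distr[OF fst f] integral_distr[OF snd f]
    using int by simp
  then have "ennreal (norm ((\<integral>u. f x u \<partial>\<mu>1) - (\<integral>u. f x' u \<partial>\<mu>2)))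
      \<le> (\<integral>\<^sup>+ p. ennreal (norm (f x (fst p) - f x' (snd p))) \<partial>\<kappa>)"
    using integral_norm_bound_ennreal[OF Bochner_Integration.integrable_diff[OF int]] by simp
  also have "\<dots> \<le> (\<integral>\<^sup>+ p. ennreal (Lt * norm (x - x')) + ennreal Lt * ennreal (norm (fst p - snd p)) \<partial>\<kappa>)"
  proof (rule nn_integral_mono)
    fix p
    have "norm (f x (fst p) - f x' (snd p)) \<le> Lt * norm (x - x') + Lt * norm (fst p - snd p)"
      using lip[of x "fst p" x' "snd p"] by (simp add: algebra_simps)
    then show "ennreal (norm (f x (fst p) - f x' (snd p)))
        \<le> ennreal (Lt * norm (x - x')) + ennreal Lt * ennreal (norm (fst p - snd p))"
      using Lt by (simp add: ennreal_mult[symmetric] ennreal_plus[symmetric] del: ennreal_plus)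
  qed
  also have "\<dots> = ennreal (Lt * norm (x - x')) + ennreal Lt * (\<integral>\<^sup>+ p. ennreal (norm (fst p - snd p)) \<partial>\<kappa>)"
    using fst snd
    by (simp add: nn_integral_add nn_integral_cmult nn_integral_const prob_space.emeasure_space_1[OF \<kappa>(1)])
  finally show ?thesis
    unfolding coupling_cost_def using Lt
    by (simp add: less_eq_ennreal.rep_eq plus_ennreal.rep_eq times_ennreal.rep_eq)
qed

lemma coupling_integral_diff_scaled_le:
  fixes f :: "'a::euclidean_space \<Rightarrow> 'a \<Rightarrow> 'b::{banach, second_countable_topology}"
  assumes cp: "coupling \<kappa> \<mu>1 \<mu>2"
    and int1: "integrable \<mu>1 (f x)" and int2: "integrable \<mu>2 (f x')"
    and lip: "\<And>z y z' y'. norm (f z y - f z' y') \<le> Lt * (norm (z - z') + norm (y - y'))"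
    and Lt: "Lt \<ge> 0" and \<epsilon>: "\<epsilon> \<ge> 0"
    and cost: "ereal (\<epsilon> * Lt) * coupling_cost \<kappa> \<le> ereal (\<epsilon> * Lt * M)"
  shows "norm (\<epsilon> *\<^sub>R ((\<integral>u. f x u \<partial>\<mu>1) - (\<integral>u. f x' u \<partial>\<mu>2))) \<le> \<epsilon> * Lt * (norm (x - x') + M)"
proof -
  have "ereal (\<epsilon> * norm ((\<integral>u. f x u \<partial>\<mu>1) - (\<integral>u. f x' u \<partial>\<mu>2)))
      = ereal \<epsilon> * ereal (norm ((\<integral>u. f x u \<partial>\<mu>1) - (\<integral>u. f x' u \<partial>\<mu>2)))" by simp
  also have "\<dots> \<le> ereal \<epsilon> * (ereal (Lt * norm (x - x')) + ereal Lt * coupling_cost \<kappa>)"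
    using coupling_integral_diff_le[OF cp int1 int2 lip Lt] \<epsilon> by (intro ereal_mult_left_mono) auto
  also have "\<dots> \<le> ereal \<epsilon> * ereal (Lt * norm (x - x')) + ereal \<epsilon> * (ereal Lt * coupling_cost \<kappa>)"
    by (rule ereal_le_distrib)
  also have "\<dots> = ereal (\<epsilon> * Lt * norm (x - x')) + ereal (\<epsilon> * Lt) * coupling_cost \<kappa>"
    by (simp add: mult.assoc[symmetric])
  also have "\<dots> \<le> ereal (\<epsilon> * Lt * norm (x - x')) + ereal (\<epsilon> * Lt * M)"
    using cost by (rule add_left_mono)
  finally show ?thesis using \<epsilon> by (simp add: algebra_simps flip: scaleR_diff_right)
qed

lemma dd_flow_same_velocity_le:
  fixes gV :: "'a::euclidean_space \<Rightarrow> 'a" and gW1 :: "'a \<Rightarrow> 'a \<Rightarrow> 'a"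
    and q p q' p' :: "'a \<Rightarrow> 'a \<Rightarrow> real \<Rightarrow> 'a"
  assumes L: "L > 0" and K: "K > 0" and Lt: "Lt \<ge> 0" and T: "T > 0" and \<epsilon>: "\<epsilon> \<ge> 0"
    and lip: "\<And>z y. norm (gV z - gV y) \<le> L * norm (z - y)"
    and far: "\<And>z y. norm (z - y) \<ge> R \<Longrightarrow>
             (z - y) \<bullet> (gV z - gV y) \<ge> K * (norm (z - y))\<^sup>2 + (1 / L) * (norm (gV z - gV y))\<^sup>2"
    and W_lip: "\<And>z y z' y'. norm (gW1 z y - gW1 z' y') \<le> Lt * (norm (z - z') + norm (y - y'))"
    and step: "(L + 2 * \<epsilon> * Lt) * T\<^sup>2 \<le> 1 / 4" and \<epsilon>_small: "\<epsilon> * Lt \<le> K / 3"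
    and flow: "dd_flow gV gW1 \<epsilon> \<mu> q p" and flow': "dd_flow gV gW1 \<epsilon> \<mu>' q' p'"
    and coup: "\<And>s. s \<in> {0..T} \<Longrightarrow> coupling (\<kappa> s) (dd_law \<mu> q s) (dd_law \<mu>' q' s)"
    and cost: "\<And>s. s \<in> {0..T} \<Longrightarrow> ereal (\<epsilon> * Lt) * coupling_cost (\<kappa> s) \<le> ereal (\<epsilon> * Lt * M)"
  shows "(norm (q x v T - q' x' v T))\<^sup>2
    \<le> (1 - 5 / 12 * K * T\<^sup>2) * (norm (x - x'))\<^sup>2 + 3 * (\<epsilon> * Lt)\<^sup>2 * M\<^sup>2 * T\<^sup>2 / (2 * K)
      + (2 * L + K) * R\<^sup>2 * T\<^sup>2"
proof -
  define z where "z t = q x v t - q' x' v t" for t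
  define I where "I t = (\<integral>u. gW1 (q x v t) u \<partial>dd_law \<mu> q t)" for t
  define I' where "I' t = (\<integral>u. gW1 (q' x' v t) u \<partial>dd_law \<mu>' q' t)" for t
  have init: "q x v 0 = x" "p x v 0 = v" "q' x' v 0 = x'" "p' x' v 0 = v"
    using flow flow' unfolding dd_flow_def by auto
  have int: "integrable (dd_law \<mu> q t) (gW1 (q x v t))" "integrable (dd_law \<mu>' q' t) (gW1 (q' x' v t))"
    and dq: "(q x v has_vector_derivative p x v t) (at t within {0..})"
      "(q' x' v has_vector_derivative p' x' v t) (at t within {0..})"
    and dp: "(p x v has_vector_derivative - gV (q x v t) - \<epsilon> *\<^sub>R I t) (at t within {0..})"
      "(p' x' v has_vector_derivative - gV (q' x' v t) - \<epsilon> *\<^sub>R I' t) (at t within {0..})"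
    if "t \<ge> 0" for t
    using flow flow' that unfolding dd_flow_def I_def I'_def by auto
  have interaction: "norm (\<epsilon> *\<^sub>R (I t - I' t)) \<le> \<epsilon> * Lt * (norm (z t) + M)" if t: "t \<in> {0..T}" for t
    unfolding I_def I'_def z_def using t int[of t]
    by (intro coupling_integral_diff_scaled_le[OF coup[OF t] _ _ W_lip Lt \<epsilon> cost[OF t]]) auto
  have "(norm (z T))\<^sup>2
      \<le> (1 - 5 / 12 * K * T\<^sup>2) * (norm (z 0))\<^sup>2 + 3 * (\<epsilon> * Lt)\<^sup>2 * M\<^sup>2 * T\<^sup>2 / (2 * K)
        + (2 * L + K) * R\<^sup>2 * T\<^sup>2"
  proof (rule second_order_contraction[where L = L and \<beta> = "\<epsilon> * Lt" and C = "(2 * L + K) * R\<^sup>2"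
        and w = "\<lambda>t. p x v t - p' x' v t" and a = "\<lambda>t. gV (q x v t) - gV (q' x' v t)"
        and b = "\<lambda>t. \<epsilon> *\<^sub>R (I t - I' t)"])
    show "0 \<le> \<epsilon> * Lt" using \<epsilon> Lt by simp
    show "(L + 2 * (\<epsilon> * Lt)) * T\<^sup>2 \<le> 1 / 4" using step by (simp add: mult.assoc)
    show "0 \<le> (2 * L + K) * R\<^sup>2" using L K by simp
    show "K \<le> L / 4" using far_monotone_const_le[OF L far] .
    show "p x v 0 - p' x' v 0 = 0" using init by simp
  next
    fix t assume "t \<in> {0..T}"
    then have t: "t \<ge> 0" by simp
    show "(z has_vector_derivative p x v t - p' x' v t) (at t within {0..})"
      unfolding z_def[abs_def] using dq[OF t] by (rule has_vector_derivative_diff)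
    show "((\<lambda>t. p x v t - p' x' v t) has_vector_derivative
        - (gV (q x v t) - gV (q' x' v t) + \<epsilon> *\<^sub>R (I t - I' t))) (at t within {0..})"
      using has_vector_derivative_diff[OF dp[OF t]]
      by (rule has_vector_derivative_eq_rhs) (simp add: algebra_simps scaleR_diff_right)
    show "z t \<bullet> (gV (q x v t) - gV (q' x' v t))
        \<ge> K * (norm (z t))\<^sup>2 + (norm (gV (q x v t) - gV (q' x' v t)))\<^sup>2 / L - (2 * L + K) * R\<^sup>2"
      unfolding z_def by (rule far_monotone_imp_inner_diff_ge[OF L K lip far])
  qed (use K T \<epsilon>_small interaction in simp_all)
  then show ?thesis using init unfolding z_def by simp
qed

lemma dd_flow_same_velocity_le_SUP_cost:
  fixes gV :: "'a::euclidean_space \<Rightarrow> 'a" and gW1 :: "'a \<Rightarrow> 'a \<Rightarrow> 'a"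
    and q p q' p' :: "'a \<Rightarrow> 'a \<Rightarrow> real \<Rightarrow> 'a"
  assumes L: "L > 0" and K: "K > 0" and Lt: "Lt \<ge> 0" and T: "T > 0" and \<epsilon>: "\<epsilon> \<ge> 0"
    and lip: "\<And>z y. norm (gV z - gV y) \<le> L * norm (z - y)"
    and far: "\<And>z y. norm (z - y) \<ge> R \<Longrightarrow>
             (z - y) \<bullet> (gV z - gV y) \<ge> K * (norm (z - y))\<^sup>2 + (1 / L) * (norm (gV z - gV y))\<^sup>2"
    and W_lip: "\<And>z y z' y'. norm (gW1 z y - gW1 z' y') \<le> Lt * (norm (z - z') + norm (y - y'))"
    and step: "(L + 2 * \<epsilon> * Lt) * T\<^sup>2 \<le> 1 / 4" and \<epsilon>_small: "\<epsilon> * Lt \<le> K / 3"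
    and flow: "dd_flow gV gW1 \<epsilon> \<mu> q p" and flow': "dd_flow gV gW1 \<epsilon> \<mu>' q' p'"
    and coup: "\<And>s. s \<in> {0..T} \<Longrightarrow> coupling (\<kappa> s) (dd_law \<mu> q s) (dd_law \<mu>' q' s)"
  shows "ereal ((norm (q x v T - q' x' v T))\<^sup>2)
    \<le> ereal ((1 - 5 / 12 * K * T\<^sup>2) * (norm (x - x'))\<^sup>2)
      + ereal (3 * (\<epsilon> * Lt)\<^sup>2 * T\<^sup>2 / (2 * K)) * (SUP s\<in>{0..T}. coupling_cost (\<kappa> s))\<^sup>2
      + ereal ((2 * L + K) * R\<^sup>2 * T\<^sup>2)"
proof -
  define S where "S = (SUP s\<in>{0..T}. coupling_cost (\<kappa> s))"
  define M where "M = real_of_ereal S"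
  have \<beta>: "0 \<le> \<epsilon> * Lt" using \<epsilon> Lt by simp
  have cost_le: "coupling_cost (\<kappa> s) \<le> S" if "s \<in> {0..T}" for s
    unfolding S_def using that by (rule SUP_upper)
  have "0 \<le> S" using cost_le[of 0] T unfolding coupling_cost_def
    by (meson atLeastAtMost_iff enn2ereal_nonneg less_imp_le order_refl order_trans)
  show ?thesis
  proof (cases "\<epsilon> * Lt > 0 \<and> S = \<infinity>")
    case True
    then have coef_inf: "ereal (3 * (\<epsilon> * Lt)\<^sup>2 * T\<^sup>2 / (2 * K)) * S\<^sup>2 = \<infinity>"
      using K T by (auto simp: power2_eq_square zero_less_mult_iff)
    show ?thesis unfolding S_def[symmetric] coef_inf by simp
  next
    case False
    \<comment> \<open>An infinite transport cost is harmless when the interaction vanishes, as \<open>0 * \<infinity> = 0\<close>.\<close>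
    then have S: "S = ereal M \<or> (\<epsilon> * Lt = 0 \<and> M = 0)"
      using \<open>0 \<le> S\<close> \<beta> unfolding M_def by (cases S) auto
    then have "ereal (\<epsilon> * Lt) * coupling_cost (\<kappa> s) \<le> ereal (\<epsilon> * Lt * M)" if "s \<in> {0..T}" for s
      using ereal_mult_left_mono[OF cost_le[OF that], of "ereal (\<epsilon> * Lt)"] \<beta>
      by (auto simp: zero_ereal_def[symmetric])
    note bound = dd_flow_same_velocity_le[OF L K Lt T \<epsilon> lip far W_lip step \<epsilon>_small flow flow' coup this]
    have "ereal (3 * (\<epsilon> * Lt)\<^sup>2 * T\<^sup>2 / (2 * K)) * S\<^sup>2 = ereal (3 * (\<epsilon> * Lt)\<^sup>2 * M\<^sup>2 * T\<^sup>2 / (2 * K))"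
      using S by (auto simp: power2_eq_square zero_ereal_def[symmetric])
    then show ?thesis unfolding S_def[symmetric] using bound by simp
  qed
qed

theorem mainTheorem7:
  fixes V :: "'a::euclidean_space \<Rightarrow> real" and gV :: "'a \<Rightarrow> 'a"
    and W :: "'a \<Rightarrow> 'a \<Rightarrow> real" and gW1 :: "'a \<Rightarrow> 'a \<Rightarrow> 'a"
    and L K R Lt T \<epsilon> :: real
    and \<mu> \<mu>' :: "'a measure"
    and q p q' p' :: "'a \<Rightarrow> 'a \<Rightarrow> real \<Rightarrow> 'a"
    and x x' v v' :: 'a
    and \<kappa> :: "real \<Rightarrow> ('a \<times> 'a) measure"
  assumes V_deriv: "\<And>z. (V has_derivative (\<lambda>h. gV z \<bullet> h)) (at z)"
    and W_deriv: "\<And>z y. ((\<lambda>u. W u y) has_derivative (\<lambda>h. gW1 z y \<bullet> h)) (at z)"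
    and W_C1: "continuous_on UNIV (\<lambda>z. gW1 (fst z) (snd z))"
    and const_pos: "L > 0" "K > 0" "R \<ge> 0" "Lt \<ge> 0"
    and a: "V 0 = 0" "\<And>z. V z \<ge> 0"
    and b: "\<And>z y. norm (gV z - gV y) \<le> L * norm (z - y)"
    and c: "\<And>z y. norm (z - y) \<ge> R \<Longrightarrow>
             (z - y) \<bullet> (gV z - gV y) \<ge> K * (norm (z - y))\<^sup>2 + (1 / L) * (norm (gV z - gV y))\<^sup>2"
    and d_sym: "\<And>z y. W z y = W y z"
    and d_lip: "\<And>z y z' y'. norm (gW1 z y - gW1 z' y') \<le> Lt * (norm (z - z') + norm (y - y'))"
    and T_pos: "T > 0" and eps_nonneg: "\<epsilon> \<ge> 0"
    and step: "(L + 2 * \<epsilon> * Lt) * T\<^sup>2 \<le> 1 / 4"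
    and eps_small: "\<epsilon> * Lt \<le> K / 3"
    and mu_prob: "prob_space \<mu>" "sets \<mu> = sets borel"
    and mu'_prob: "prob_space \<mu>'" "sets \<mu>' = sets borel"
    and flow: "dd_flow gV gW1 \<epsilon> \<mu> q p"
    and flow': "dd_flow gV gW1 \<epsilon> \<mu>' q' p'"
    and same_v: "v = v'"
    and coup: "\<And>s. s \<in> {0..T} \<Longrightarrow> coupling (\<kappa> s) (dd_law \<mu> q s) (dd_law \<mu>' q' s)"
  shows "ereal ((norm (q x v T - q' x' v' T))\<^sup>2)
     \<le> ereal ((1 - 5 / 12 * K * T\<^sup>2) * (norm (x - x'))\<^sup>2)
        + ereal (\<epsilon>\<^sup>2 * Lt\<^sup>2 * T ^ 4 * (7 / 6 + 3 / (2 * K * T\<^sup>2)))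
            * (SUP s\<in>{0..T}. coupling_cost (\<kappa> s))\<^sup>2
        + ereal ((2 * L + K) * R\<^sup>2 * T\<^sup>2)"
proof -
  define S where "S = (SUP s\<in>{0..T}. coupling_cost (\<kappa> s))"
  have bound: "ereal ((norm (q x v T - q' x' v T))\<^sup>2)
      \<le> ereal ((1 - 5 / 12 * K * T\<^sup>2) * (norm (x - x'))\<^sup>2)
        + ereal (3 * (\<epsilon> * Lt)\<^sup>2 * T\<^sup>2 / (2 * K)) * S\<^sup>2 + ereal ((2 * L + K) * R\<^sup>2 * T\<^sup>2)"
    unfolding S_def using const_pos
    by (intro dd_flow_same_velocity_le_SUP_cost[OF _ _ _ T_pos eps_nonneg b c d_lip step eps_small
          flow flow' coup]) auto
  have "ereal (3 * (\<epsilon> * Lt)\<^sup>2 * T\<^sup>2 / (2 * K)) * S\<^sup>2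
      \<le> ereal (\<epsilon>\<^sup>2 * Lt\<^sup>2 * T ^ 4 * (7 / 6 + 3 / (2 * K * T\<^sup>2))) * S\<^sup>2"
  proof (rule ereal_mult_right_mono)
    have "3 * (\<epsilon> * Lt)\<^sup>2 * T\<^sup>2 / (2 * K) \<le> (\<epsilon> * Lt)\<^sup>2 * (7 / 6 * T ^ 4 + 3 * T\<^sup>2 / (2 * K))"
      by (simp add: algebra_simps)
    also have "\<dots> = \<epsilon>\<^sup>2 * Lt\<^sup>2 * T ^ 4 * (7 / 6 + 3 / (2 * K * T\<^sup>2))"
      using T_pos by (simp add: field_simps power2_eq_square power4_eq_xxxx)
    finally show "ereal (3 * (\<epsilon> * Lt)\<^sup>2 * T\<^sup>2 / (2 * K)) \<le> ereal (\<epsilon>\<^sup>2 * Lt\<^sup>2 * T ^ 4 * (7 / 6 + 3 / (2 * K * T\<^sup>2)))"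
      by simp
  qed (cases S, auto simp: power2_eq_square)
  from order_trans[OF bound add_mono[OF add_mono[OF order_refl this] order_refl]]
  show ?thesis using same_v by (simp add: S_def)
qed

end
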